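(* Let $\theta>0$ and let $(Z_{ij}: i,j\in\mathbb{Z})$ be a real stationary Gaussian process with mean $\theta$ and covariance kernel $R(i,j)=\mathrm{Cov}(Z_{00},Z_{ij})$ satisfying $\sum_{i,j\in\mathbb{Z}}|R(i,j)|<\infty$ and $\sum_{i,j\in\mathbb{Z}}R(i,j)\neq0$. Let $X_{ij}=Z_{ij}-\theta$ and let $W_N$ be the $N\times N$ symmetric random matrix with entries $W_N(i,j)=X_{ij}+X_{ji}$, $1\le i,j\le N$. Then the family $\{N^{-1/2}\|W_N\|: N=1,2,\ldots\}$ is stochastically tight, i.e. $\|W_N\|=O_p(\sqrt N)$, where $\|\cdot\|$ denotes the operator norm $\|M\|=\max_{x\in\mathbb{R}^N,\|x\|=1}\|Mx\|$ with respect to the Euclidean norm.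
   Context: Stationarity means the law of the process is invariant under shifts of the index set $\mathbb{Z}^2$, so $\mathrm{Cov}(Z_{ij},Z_{kl})=R(k-i,l-j)$. Equivalently $W_N=A_N-\mathrm{E}(A_N)$ where $A_N(i,j)=Z_{ij}+Z_{ji}$. A family $(Y_N)$ is $O_p(a_N)$ if $\lim_{t\to\infty}\sup_N P(|Y_N|>t a_N)=0$. *)

theory Defs
  imports "HOL-Probability.Probability"
begin

definition gaussian_rv :: "'a measure \<Rightarrow> ('a \<Rightarrow> real) \<Rightarrow> bool" where
  "gaussian_rv M Y \<longleftrightarrow> Y \<in> borel_measurable M \<and>
     ((\<exists>\<mu> \<sigma>. \<sigma> > 0 \<and> distributed M lborel Y (normal_density \<mu> \<sigma>)) \<or>
      (\<exists>c. AE \<omega> in M. Y \<omega> = c))"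

definition gaussian_process :: "'a measure \<Rightarrow> ('i \<Rightarrow> 'a \<Rightarrow> real) \<Rightarrow> bool" where
  "gaussian_process M Z \<longleftrightarrow> (\<forall>i. Z i \<in> borel_measurable M) \<and>
     (\<forall>(S::'i set) (c::'i \<Rightarrow> real). finite S \<longrightarrow> gaussian_rv M (\<lambda>\<omega>. \<Sum>s\<in>S. c s * Z s \<omega>))"

definition stationary_Z2 :: "'a measure \<Rightarrow> (int \<times> int \<Rightarrow> 'a \<Rightarrow> real) \<Rightarrow> bool" where
  "stationary_Z2 M Z \<longleftrightarrow>
     (\<forall>(n::nat) (idx :: nat \<Rightarrow> int \<times> int) (h :: int \<times> int).
        distr M (Pi\<^sub>M {..<n} (\<lambda>_. borel)) (\<lambda>\<omega>. \<lambda>k\<in>{..<n}. Z (idx k) \<omega>) =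
        distr M (Pi\<^sub>M {..<n} (\<lambda>_. borel)) (\<lambda>\<omega>. \<lambda>k\<in>{..<n}. Z (idx k + h) \<omega>))"

definition op_norm :: "nat \<Rightarrow> (int \<Rightarrow> int \<Rightarrow> real) \<Rightarrow> real" where
  "op_norm N A = Sup {sqrt (\<Sum>i=1..int N. (\<Sum>j=1..int N. A i j * x j)\<^sup>2) | x :: int \<Rightarrow> real.
                        (\<Sum>j=1..int N. (x j)\<^sup>2) = 1}"

end

theory Submission
  imports Defs
begin

text \<open>The operator norm is controlled by the bilinear form on a finite net: integer
  points scaled by \<open>1 / (2 \<surd>N)\<close> give a \<open>1/4\<close>-net of the sphere with at most \<open>24^N\<close>
  elements, and \<open>\<parallel>W\<parallel> \<le> 8/3 max \<bar>\<langle>u, W v\<rangle>\<bar>\<close> over pairs of net points. Each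
  \<open>\<langle>u, W v\<rangle>\<close> is a centred Gaussian linear combination of the field; by stationarity
  and the Schur test its variance is at most \<open>(81/4) \<Sum>\<bar>R\<bar>\<close>. Markov's inequality for
  the \<open>2N\<close>-th moment, \<open>E Y^(2N) \<le> (N E Y^2)^N\<close>, bounds its tail at level
  \<open>3 t \<surd>N / 8\<close> by \<open>(144 \<Sum>\<bar>R\<bar> / t^2)^N\<close>, which beats the \<open>24^(2N)\<close> pairs
  uniformly in \<open>N\<close> once \<open>t\<close> is large.\<close>

lemma fact_double_le: "fact (2 * k) \<le> (2 * k) ^ k * (fact k :: nat)"
proof -
  have "fact (2 * k) div fact k \<le> (2 * k) ^ k" using fact_div_fact_le_pow[of k "2 * k"] by simp
  moreover have "fact k dvd (fact (2 * k) :: nat)" by (simp add: fact_dvd)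
  ultimately show ?thesis by (metis dvd_mult_div_cancel mult.commute mult_le_mono1)
qed

lemma integrable_mult_of_square_integrable:
  fixes f g :: "'a \<Rightarrow> real"
  assumes [measurable]: "f \<in> borel_measurable M" "g \<in> borel_measurable M"
    and "integrable M (\<lambda>x. (f x)\<^sup>2)" "integrable M (\<lambda>x. (g x)\<^sup>2)"
  shows "integrable M (\<lambda>x. f x * g x)"
proof (rule Bochner_Integration.integrable_bound)
  show "integrable M (\<lambda>x. (f x)\<^sup>2 + (g x)\<^sup>2)" using assms by simp
  show "AE x in M. norm (f x * g x) \<le> norm ((f x)\<^sup>2 + (g x)\<^sup>2)"
  proof (intro AE_I2)
    fix x
    have "\<bar>f x * g x\<bar> \<le> 2 * \<bar>f x\<bar> * \<bar>g x\<bar>" by (simp add: abs_mult)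
    also have "\<dots> \<le> \<bar>f x\<bar>\<^sup>2 + \<bar>g x\<bar>\<^sup>2" by (rule sum_squares_bound)
    finally show "norm (f x * g x) \<le> norm ((f x)\<^sup>2 + (g x)\<^sup>2)" by simp
  qed
qed simp

lemma gaussian_rv_measurable: "gaussian_rv M Y \<Longrightarrow> Y \<in> borel_measurable M"
  by (simp add: gaussian_rv_def)

lemma gaussian_rv_cases:
  assumes "gaussian_rv M Y"
  obtains (normal) \<mu> \<sigma> where "\<sigma> > 0" "distributed M lborel Y (normal_density \<mu> \<sigma>)"
    | (const) c where "AE \<omega> in M. Y \<omega> = c"
  using assms unfolding gaussian_rv_def by blast

context prob_space
begin

lemma gaussian_rv_add_const:
  assumes "gaussian_rv M Y"
  shows "gaussian_rv M (\<lambda>\<omega>. Y \<omega> + b)"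
  using assms
proof (cases rule: gaussian_rv_cases)
  case (normal \<mu> \<sigma>)
  have "distributed M lborel (\<lambda>\<omega>. b + 1 * Y \<omega>) (normal_density (b + 1 * \<mu>) (\<bar>1\<bar> * \<sigma>))"
    by (rule normal_density_affine[OF normal(2,1)]) simp
  then show ?thesis
    using normal(1) gaussian_rv_measurable[OF assms] unfolding gaussian_rv_def by (auto simp: add.commute)
next
  case (const c)
  then have "AE \<omega> in M. Y \<omega> + b = c + b" by auto
  then show ?thesis
    using gaussian_rv_measurable[OF assms] unfolding gaussian_rv_def by auto
qed

lemma gaussian_rv_integrable:
  assumes "gaussian_rv M Y"
  shows "integrable M Y"
  using assms
proof (cases rule: gaussian_rv_cases)
  case (normal \<mu> \<sigma>)
  then show ?thesis
    using distributed_integrable[OF normal(2), of "\<lambda>x. x"] integrable_normal_moment_nz_1 by simp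
next
  case (const c)
  show ?thesis
    using const gaussian_rv_measurable[OF assms]
    by (intro integrable_cong_AE_imp[where g = "\<lambda>_. c", OF integrable_const]) auto
qed

lemma centered_gaussian_rv_cases:
  assumes "gaussian_rv M Y" and "expectation Y = 0"
  obtains (normal) \<sigma> where "\<sigma> > 0" "distributed M lborel Y (normal_density 0 \<sigma>)"
    | (zero) "AE \<omega> in M. Y \<omega> = 0"
  using assms(1)
proof (cases rule: gaussian_rv_cases)
  case (normal \<mu> \<sigma>)
  then show ?thesis using that(1) normal_distributed_expectation assms(2) by metis
next
  case (const c)
  then have "expectation Y = c"
    using gaussian_rv_measurable[OF assms(1)] by (simp add: integral_cong_AE[of Y M "\<lambda>_. c"] prob_space)
  then show ?thesis using that(2) const assms(2) by simp
qed

lemma centered_gaussian_rv_integrable_power: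
  assumes "gaussian_rv M Y" and "expectation Y = 0"
  shows "integrable M (\<lambda>\<omega>. Y \<omega> ^ n)"
  using assms
proof (cases rule: centered_gaussian_rv_cases)
  case (normal \<sigma>)
  then show ?thesis
    using distributed_integrable[OF normal(2), of "\<lambda>x. x ^ n"]
      integrable_normal_moment[where \<mu> = 0 and \<sigma> = \<sigma> and k = n]
    by simp
next
  case zero
  note gaussian_rv_measurable[OF assms(1), measurable]
  show ?thesis by (rule integrable_cong_AE_imp[where g = "\<lambda>_. 0 ^ n"]) (use zero in auto)
qed

text \<open>From the Gaussian moments \<open>E Y^(2k) = (2k)! \<sigma>^(2k) / (2^k k!)\<close>
  and \<open>(2k)! / k! \<le> (2k)^k\<close>.\<close>
lemma centered_gaussian_rv_even_moment_le:
  assumes "gaussian_rv M Y" and "expectation Y = 0"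
  shows "expectation (\<lambda>\<omega>. Y \<omega> ^ (2 * k)) \<le> (real k * expectation (\<lambda>\<omega>. Y \<omega> ^ 2)) ^ k"
  using assms
proof (cases rule: centered_gaussian_rv_cases)
  case (normal \<sigma>)
  have moment: "expectation (\<lambda>\<omega>. Y \<omega> ^ (2 * j)) = fact (2 * j) / ((2 / \<sigma>\<^sup>2) ^ j * fact j)" for j
    using distributed_integral[OF normal(2), of "\<lambda>x. x ^ (2 * j)"]
      normal_moment_even[where \<mu> = 0 and \<sigma> = \<sigma> and k = j] normal(1)
    by (simp add: has_bochner_integral_iff)
  have second: "expectation (\<lambda>\<omega>. Y \<omega> ^ 2) = \<sigma>\<^sup>2"
    using moment[of 1] normal(1) by simp
  have "real (fact (2 * k)) \<le> real ((2 * k) ^ k * fact k)"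
    using fact_double_le[of k] by (simp only: of_nat_le_iff)
  then have fact_ratio: "real (fact (2 * k)) / real (fact k) \<le> real ((2 * k) ^ k)"
    by (simp add: divide_le_eq del: of_nat_fact)
  have "fact (2 * k) / ((2 / \<sigma>\<^sup>2) ^ k * fact k) = real (fact (2 * k)) / real (fact k) * (\<sigma>\<^sup>2 / 2) ^ k"
    using normal(1) by (simp add: power_divide)
  also have "\<dots> \<le> real ((2 * k) ^ k) * (\<sigma>\<^sup>2 / 2) ^ k"
    using fact_ratio by (rule mult_right_mono) simp
  also have "\<dots> = (real (2 * k) * (\<sigma>\<^sup>2 / 2)) ^ k"
    unfolding of_nat_power by (rule power_mult_distrib[symmetric])
  also have "real (2 * k) * (\<sigma>\<^sup>2 / 2) = real k * \<sigma>\<^sup>2"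
    by simp
  finally show ?thesis unfolding moment second .
next
  case zero
  note gaussian_rv_measurable[OF assms(1), measurable]
  have "expectation (\<lambda>\<omega>. Y \<omega> ^ n) = expectation (\<lambda>_. 0 ^ n)" for n
    using zero by (intro integral_cong_AE) auto
  then have moment: "expectation (\<lambda>\<omega>. Y \<omega> ^ n) = 0 ^ n" for n
    by (simp add: prob_space)
  show ?thesis unfolding moment by (cases k) simp_all
qed

lemma centered_gaussian_rv_tail_le:
  assumes "gaussian_rv M Y" and "expectation Y = 0" and "a > 0"
  shows "prob {\<omega> \<in> space M. a < \<bar>Y \<omega>\<bar>} \<le> (real k * expectation (\<lambda>\<omega>. Y \<omega> ^ 2)) ^ k / a ^ (2 * k)"
proof -
  note gaussian_rv_measurable[OF assms(1), measurable]
  have "prob {\<omega> \<in> space M. a < \<bar>Y \<omega>\<bar>} \<le> prob {\<omega> \<in> space M. a ^ (2 * k) \<le> Y \<omega> ^ (2 * k)}"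
  proof (rule finite_measure_mono)
    show "{\<omega> \<in> space M. a < \<bar>Y \<omega>\<bar>} \<subseteq> {\<omega> \<in> space M. a ^ (2 * k) \<le> Y \<omega> ^ (2 * k)}"
    proof safe
      fix \<omega> assume "a < \<bar>Y \<omega>\<bar>"
      then have "a ^ (2 * k) \<le> \<bar>Y \<omega>\<bar> ^ (2 * k)" using \<open>a > 0\<close> by (intro power_mono) auto
      then show "a ^ (2 * k) \<le> Y \<omega> ^ (2 * k)" by (simp add: power_even_abs)
    qed
  qed measurable
  also have "\<dots> \<le> expectation (\<lambda>\<omega>. Y \<omega> ^ (2 * k)) / a ^ (2 * k)"
    using \<open>a > 0\<close> centered_gaussian_rv_integrable_power[OF assms(1,2)]
    by (intro integral_Markov_inequality_measure[where A = "space M"]) auto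
  also have "\<dots> \<le> (real k * expectation (\<lambda>\<omega>. Y \<omega> ^ 2)) ^ k / a ^ (2 * k)"
    using \<open>a > 0\<close> centered_gaussian_rv_even_moment_le[OF assms(1,2)] by (intro divide_right_mono) auto
  finally show ?thesis .
qed

end

lemma sum_abs_reindex_le_infsum:
  fixes R :: "'a \<Rightarrow> real"
  assumes "finite P" and "(\<lambda>s. \<bar>R s\<bar>) summable_on UNIV" and "inj_on h P"
  shows "(\<Sum>q\<in>P. \<bar>R (h q)\<bar>) \<le> infsum (\<lambda>s. \<bar>R s\<bar>) UNIV"
proof -
  have "(\<Sum>q\<in>P. \<bar>R (h q)\<bar>) = (\<Sum>s\<in>h ` P. \<bar>R s\<bar>)"
    using sum.reindex[OF assms(3), of "\<lambda>s. \<bar>R s\<bar>"] by simp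
  also have "\<dots> \<le> infsum (\<lambda>s. \<bar>R s\<bar>) UNIV"
    using assms(1,2) by (intro finite_sum_le_infsum) auto
  finally show ?thesis .
qed

text \<open>Schur test: \<open>c p c q \<le> (c p\<^sup>2 + c q\<^sup>2) / 2\<close>, and every row and column of
  \<open>\<bar>R (q - p)\<bar>\<close> sums to at most \<open>\<Sum>\<bar>R\<bar>\<close>.\<close>
lemma quadratic_form_le_abs_summable:
  fixes R :: "'g::ab_group_add \<Rightarrow> real" and c :: "'g \<Rightarrow> real"
  assumes fin: "finite P" and summable: "(\<lambda>s. \<bar>R s\<bar>) summable_on UNIV"
  shows "(\<Sum>p\<in>P. \<Sum>q\<in>P. c p * c q * R (q - p)) \<le> infsum (\<lambda>s. \<bar>R s\<bar>) UNIV * (\<Sum>p\<in>P. (c p)\<^sup>2)"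
proof -
  define S where "S = infsum (\<lambda>s. \<bar>R s\<bar>) UNIV"
  have row: "(\<Sum>q\<in>P. \<bar>R (q - p)\<bar>) \<le> S" for p
    unfolding S_def by (rule sum_abs_reindex_le_infsum[OF fin summable]) (auto simp: inj_on_def)
  have column: "(\<Sum>p\<in>P. \<bar>R (q - p)\<bar>) \<le> S" for q
    unfolding S_def by (rule sum_abs_reindex_le_infsum[OF fin summable]) (auto simp: inj_on_def)
  have term_le: "c p * c q * R (q - p) \<le> ((c p)\<^sup>2 * \<bar>R (q - p)\<bar> + (c q)\<^sup>2 * \<bar>R (q - p)\<bar>) / 2" for p q
  proof -
    have "2 * \<bar>c p\<bar> * \<bar>c q\<bar> \<le> \<bar>c p\<bar>\<^sup>2 + \<bar>c q\<bar>\<^sup>2" by (rule sum_squares_bound)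
    then have "\<bar>c p * c q\<bar> * \<bar>R (q - p)\<bar> \<le> ((c p)\<^sup>2 + (c q)\<^sup>2) / 2 * \<bar>R (q - p)\<bar>"
      by (intro mult_right_mono) (auto simp: abs_mult)
    moreover have "c p * c q * R (q - p) \<le> \<bar>c p * c q\<bar> * \<bar>R (q - p)\<bar>"
      by (metis abs_ge_self abs_mult)
    ultimately show ?thesis by (simp add: algebra_simps)
  qed
  have rows: "(\<Sum>p\<in>P. \<Sum>q\<in>P. (c p)\<^sup>2 * \<bar>R (q - p)\<bar>) = (\<Sum>p\<in>P. (c p)\<^sup>2 * (\<Sum>q\<in>P. \<bar>R (q - p)\<bar>))"
    by (simp only: sum_distrib_left)
  have columns: "(\<Sum>p\<in>P. \<Sum>q\<in>P. (c q)\<^sup>2 * \<bar>R (q - p)\<bar>) = (\<Sum>q\<in>P. (c q)\<^sup>2 * (\<Sum>p\<in>P. \<bar>R (q - p)\<bar>))"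
    by (subst sum.swap) (simp only: sum_distrib_left)
  have "(\<Sum>p\<in>P. \<Sum>q\<in>P. c p * c q * R (q - p))
      \<le> (\<Sum>p\<in>P. \<Sum>q\<in>P. ((c p)\<^sup>2 * \<bar>R (q - p)\<bar> + (c q)\<^sup>2 * \<bar>R (q - p)\<bar>) / 2)"
    by (intro sum_mono term_le)
  also have "\<dots> = ((\<Sum>p\<in>P. (c p)\<^sup>2 * (\<Sum>q\<in>P. \<bar>R (q - p)\<bar>)) + (\<Sum>q\<in>P. (c q)\<^sup>2 * (\<Sum>p\<in>P. \<bar>R (q - p)\<bar>))) / 2"
    by (simp only: sum_divide_distrib[symmetric] sum.distrib rows columns)
  also have "\<dots> \<le> ((\<Sum>p\<in>P. (c p)\<^sup>2 * S) + (\<Sum>q\<in>P. (c q)\<^sup>2 * S)) / 2"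
    using row column by (intro divide_right_mono add_mono sum_mono mult_left_mono) auto
  also have "\<dots> = S * (\<Sum>p\<in>P. (c p)\<^sup>2)"
    by (simp add: sum_distrib_right[symmetric])
  finally show ?thesis unfolding S_def .
qed

locale stationary_gaussian_field = prob_space M for M :: "'a measure" +
  fixes Z :: "int \<times> int \<Rightarrow> 'a \<Rightarrow> real" and \<theta> :: real and R :: "int \<times> int \<Rightarrow> real"
  assumes gaussian: "gaussian_process M Z"
    and stationary: "stationary_Z2 M Z"
    and mean: "\<And>s. expectation (Z s) = \<theta>"
    and covariance: "\<And>s. R s = expectation (\<lambda>\<omega>. (Z (0, 0) \<omega> - \<theta>) * (Z s \<omega> - \<theta>))"
    and abs_summable: "(\<lambda>s. \<bar>R s\<bar>) summable_on UNIV"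
begin

lemma measurable_Z [measurable]: "Z s \<in> borel_measurable M"
  using gaussian by (cases s) (simp add: gaussian_process_def)

lemma gaussian_rv_lincomb: "finite Q \<Longrightarrow> gaussian_rv M (\<lambda>\<omega>. \<Sum>p\<in>Q. c p * Z p \<omega>)"
  using gaussian unfolding gaussian_process_def by blast

lemma gaussian_rv_Z: "gaussian_rv M (Z s)"
  using gaussian_rv_lincomb[of "{s}" "\<lambda>_. 1"] by simp

lemma gaussian_rv_centered_lincomb: "gaussian_rv M (\<lambda>\<omega>. \<Sum>p\<in>Q. c p * (Z p \<omega> - \<theta>))"
proof (cases "finite Q")
  case True
  have "gaussian_rv M (\<lambda>\<omega>. (\<Sum>p\<in>Q. c p * Z p \<omega>) + - \<theta> * (\<Sum>p\<in>Q. c p))"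
    by (intro gaussian_rv_add_const gaussian_rv_lincomb True)
  then show ?thesis
    by (simp add: right_diff_distrib sum_subtractf sum_distrib_left mult.commute sum_negf)
next
  case False
  then show ?thesis by (simp add: gaussian_rv_def)
qed

lemma expectation_centered_lincomb: "expectation (\<lambda>\<omega>. \<Sum>p\<in>Q. c p * (Z p \<omega> - \<theta>)) = 0"
proof -
  have integrable: "integrable M (\<lambda>\<omega>. Z p \<omega> - \<theta>)" for p
    using gaussian_rv_integrable[OF gaussian_rv_Z] by simp
  have "expectation (\<lambda>\<omega>. Z p \<omega> - \<theta>) = 0" for p
    using gaussian_rv_integrable[OF gaussian_rv_Z] by (simp add: mean prob_space)
  then show ?thesis
    using integrable by (simp add: Bochner_Integration.integral_sum)
qed

lemma integrable_centered_square: "integrable M (\<lambda>\<omega>. (Z s \<omega> - \<theta>)\<^sup>2)"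
proof -
  have "integrable M (\<lambda>\<omega>. (\<Sum>p\<in>{s}. 1 * (Z p \<omega> - \<theta>)) ^ 2)"
    by (rule centered_gaussian_rv_integrable_power[OF gaussian_rv_centered_lincomb
          expectation_centered_lincomb])
  then show ?thesis by simp
qed

lemma covariance_shift: "expectation (\<lambda>\<omega>. (Z p \<omega> - \<theta>) * (Z q \<omega> - \<theta>)) = R (q - p)"
proof -
  define idx where "idx = (\<lambda>k::nat. if k = 0 then p else q)"
  define PM where "PM = (Pi\<^sub>M {..<(2::nat)} (\<lambda>_. (borel :: real measure)))"
  define F where "F = (\<lambda>\<omega>. \<lambda>k\<in>{..<(2::nat)}. Z (idx k) \<omega>)"
  define F_shifted where "F_shifted = (\<lambda>\<omega>. \<lambda>k\<in>{..<(2::nat)}. Z (idx k + - p) \<omega>)"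
  define g where "g = (\<lambda>x::nat \<Rightarrow> real. (x 0 - \<theta>) * (x 1 - \<theta>))"
  have g_measurable: "g \<in> borel_measurable PM" unfolding g_def PM_def by measurable
  have F_measurable: "F \<in> measurable M PM" "F_shifted \<in> measurable M PM"
    unfolding F_def F_shifted_def PM_def by (intro measurable_restrict measurable_Z)+
  have "distr M PM F = distr M PM F_shifted"
    using stationary unfolding stationary_Z2_def PM_def F_def F_shifted_def by blast
  then have "expectation (\<lambda>\<omega>. g (F \<omega>)) = expectation (\<lambda>\<omega>. g (F_shifted \<omega>))"
    by (simp add: integral_distr[OF F_measurable(1) g_measurable, symmetric]
        integral_distr[OF F_measurable(2) g_measurable, symmetric])
  then show ?thesis
    by (simp add: g_def F_def F_shifted_def idx_def covariance zero_prod_def)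
qed

lemma second_moment_centered_lincomb:
  "expectation (\<lambda>\<omega>. (\<Sum>p\<in>Q. c p * (Z p \<omega> - \<theta>))\<^sup>2) = (\<Sum>p\<in>Q. \<Sum>q\<in>Q. c p * c q * R (q - p))"
proof -
  have "integrable M (\<lambda>\<omega>. (Z p \<omega> - \<theta>) * (Z q \<omega> - \<theta>))" for p q
    by (intro integrable_mult_of_square_integrable integrable_centered_square) measurable
  then have "expectation (\<lambda>\<omega>. \<Sum>p\<in>Q. \<Sum>q\<in>Q. c p * c q * ((Z p \<omega> - \<theta>) * (Z q \<omega> - \<theta>)))
      = (\<Sum>p\<in>Q. \<Sum>q\<in>Q. c p * c q * R (q - p))"
    by (simp add: Bochner_Integration.integral_sum covariance_shift)
  moreover have "(\<Sum>p\<in>Q. c p * (Z p \<omega> - \<theta>))\<^sup>2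
      = (\<Sum>p\<in>Q. \<Sum>q\<in>Q. c p * c q * ((Z p \<omega> - \<theta>) * (Z q \<omega> - \<theta>)))" for \<omega>
    unfolding power2_eq_square sum_product by (simp add: algebra_simps)
  ultimately show ?thesis by simp
qed

lemma centered_lincomb_tail_le:
  assumes "finite Q" and "a > 0"
  shows "prob {\<omega> \<in> space M. a < \<bar>\<Sum>p\<in>Q. c p * (Z p \<omega> - \<theta>)\<bar>}
    \<le> (real k * (infsum (\<lambda>s. \<bar>R s\<bar>) UNIV * (\<Sum>p\<in>Q. (c p)\<^sup>2))) ^ k / a ^ (2 * k)"
proof -
  let ?Y = "\<lambda>\<omega>. \<Sum>p\<in>Q. c p * (Z p \<omega> - \<theta>)"
  have "expectation (\<lambda>\<omega>. ?Y \<omega> ^ 2) \<le> infsum (\<lambda>s. \<bar>R s\<bar>) UNIV * (\<Sum>p\<in>Q. (c p)\<^sup>2)"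
    unfolding second_moment_centered_lincomb
    by (rule quadratic_form_le_abs_summable[OF assms(1) abs_summable])
  moreover have "0 \<le> expectation (\<lambda>\<omega>. ?Y \<omega> ^ 2)" by simp
  ultimately have "(real k * expectation (\<lambda>\<omega>. ?Y \<omega> ^ 2)) ^ k
      \<le> (real k * (infsum (\<lambda>s. \<bar>R s\<bar>) UNIV * (\<Sum>p\<in>Q. (c p)\<^sup>2))) ^ k"
    by (simp add: mult_left_mono power_mono)
  then have "(real k * expectation (\<lambda>\<omega>. ?Y \<omega> ^ 2)) ^ k / a ^ (2 * k)
      \<le> (real k * (infsum (\<lambda>s. \<bar>R s\<bar>) UNIV * (\<Sum>p\<in>Q. (c p)\<^sup>2))) ^ k / a ^ (2 * k)"
    using assms(2) by (simp add: divide_right_mono)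
  with centered_gaussian_rv_tail_le[OF gaussian_rv_centered_lincomb expectation_centered_lincomb assms(2)]
  show ?thesis by (rule order_trans)
qed

end

lemma abs_sum_mult_le_sqrt:
  fixes a b :: "'i \<Rightarrow> real"
  shows "\<bar>\<Sum>i\<in>I. a i * b i\<bar> \<le> sqrt (\<Sum>i\<in>I. (a i)\<^sup>2) * sqrt (\<Sum>i\<in>I. (b i)\<^sup>2)"
proof -
  have "\<bar>\<Sum>i\<in>I. a i * b i\<bar> = sqrt ((\<Sum>i\<in>I. a i * b i)\<^sup>2)" by simp
  also have "\<dots> \<le> sqrt ((\<Sum>i\<in>I. (a i)\<^sup>2) * (\<Sum>i\<in>I. (b i)\<^sup>2))"
    by (rule real_sqrt_le_mono) (rule Cauchy_Schwarz_ineq_sum)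
  finally show ?thesis by (simp add: real_sqrt_mult)
qed

lemma op_norm_ge:
  assumes "(\<Sum>j=1..int N. (x j)\<^sup>2) = 1"
  shows "sqrt (\<Sum>i=1..int N. (\<Sum>j=1..int N. A i j * x j)\<^sup>2) \<le> op_norm N A"
proof -
  have "sqrt (\<Sum>i=1..int N. (\<Sum>j=1..int N. A i j * y j)\<^sup>2) \<le> sqrt (\<Sum>i=1..int N. \<Sum>j=1..int N. (A i j)\<^sup>2)"
    if "(\<Sum>j=1..int N. (y j)\<^sup>2) = 1" for y
  proof (rule real_sqrt_le_mono)
    have "(\<Sum>i=1..int N. (\<Sum>j=1..int N. A i j * y j)\<^sup>2)
        \<le> (\<Sum>i=1..int N. (\<Sum>j=1..int N. (A i j)\<^sup>2) * (\<Sum>j=1..int N. (y j)\<^sup>2))"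
      by (intro sum_mono Cauchy_Schwarz_ineq_sum)
    then show "(\<Sum>i=1..int N. (\<Sum>j=1..int N. A i j * y j)\<^sup>2) \<le> (\<Sum>i=1..int N. \<Sum>j=1..int N. (A i j)\<^sup>2)"
      using that by simp
  qed
  then have "bdd_above {sqrt (\<Sum>i=1..int N. (\<Sum>j=1..int N. A i j * y j)\<^sup>2) | y :: int \<Rightarrow> real.
      (\<Sum>j=1..int N. (y j)\<^sup>2) = 1}"
    by (intro bdd_aboveI) blast
  then show ?thesis
    unfolding op_norm_def using assms by (intro cSup_upper) auto
qed

lemma op_norm_sum_squares_le:
  "(\<Sum>i=1..int N. (\<Sum>j=1..int N. A i j * z j)\<^sup>2) \<le> (op_norm N A)\<^sup>2 * (\<Sum>j=1..int N. (z j)\<^sup>2)"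
proof (cases "(\<Sum>j=1..int N. (z j)\<^sup>2) = 0")
  case True
  then have "\<forall>j\<in>{1..int N}. z j = 0" by (subst (asm) sum_nonneg_eq_0_iff) auto
  then show ?thesis by simp
next
  case False
  define r where "r = sqrt (\<Sum>j=1..int N. (z j)\<^sup>2)"
  have r2: "r\<^sup>2 = (\<Sum>j=1..int N. (z j)\<^sup>2)" and "r > 0"
    using False unfolding r_def by (simp_all add: sum_nonneg order_le_neq_trans)
  have "(\<Sum>j=1..int N. (z j / r)\<^sup>2) = 1"
    using False by (simp add: power_divide sum_divide_distrib[symmetric] r2)
  then have "sqrt (\<Sum>i=1..int N. (\<Sum>j=1..int N. A i j * (z j / r))\<^sup>2) \<le> op_norm N A"
    by (rule op_norm_ge)
  then have "(\<Sum>i=1..int N. (\<Sum>j=1..int N. A i j * (z j / r))\<^sup>2) \<le> (op_norm N A)\<^sup>2"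
    by (rule sqrt_le_D)
  moreover have "(\<Sum>i=1..int N. (\<Sum>j=1..int N. A i j * (z j / r))\<^sup>2)
      = (\<Sum>i=1..int N. (\<Sum>j=1..int N. A i j * z j)\<^sup>2) / r\<^sup>2"
    by (simp add: sum_divide_distrib[symmetric] power_divide)
  ultimately have "(\<Sum>i=1..int N. (\<Sum>j=1..int N. A i j * z j)\<^sup>2) / r\<^sup>2 \<le> (op_norm N A)\<^sup>2"
    by simp
  then show ?thesis
    unfolding r2[symmetric] using \<open>r > 0\<close> by (simp add: pos_divide_le_eq)
qed

lemma exists_unit_vector:
  assumes "N > 0"
  obtains e :: "int \<Rightarrow> real" where "(\<Sum>j=1..int N. (e j)\<^sup>2) = 1"
proof
  have "(\<Sum>j=1..int N. (if j = 1 then 1 else 0 :: real)\<^sup>2) = (\<Sum>j=1..int N. if j = 1 then 1 else 0)"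
    by (intro sum.cong) auto
  also have "\<dots> = 1"
    using assms by simp
  finally show "(\<Sum>j=1..int N. (if j = 1 then 1 else 0 :: real)\<^sup>2) = 1" .
qed

lemma op_norm_le:
  assumes "N > 0"
    and "\<And>x. (\<Sum>j=1..int N. (x j)\<^sup>2) = 1 \<Longrightarrow> sqrt (\<Sum>i=1..int N. (\<Sum>j=1..int N. A i j * x j)\<^sup>2) \<le> b"
  shows "op_norm N A \<le> b"
proof -
  obtain e :: "int \<Rightarrow> real" where "(\<Sum>j=1..int N. (e j)\<^sup>2) = 1" by (rule exists_unit_vector[OF assms(1)])
  then show ?thesis
    unfolding op_norm_def using assms(2) by (intro cSup_least) auto
qed

lemma op_norm_nonneg:
  assumes "N > 0"
  shows "0 \<le> op_norm N A"
proof -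
  obtain e :: "int \<Rightarrow> real" where "(\<Sum>j=1..int N. (e j)\<^sup>2) = 1" by (rule exists_unit_vector[OF assms])
  then have "sqrt (\<Sum>i=1..int N. (\<Sum>j=1..int N. A i j * e j)\<^sup>2) \<le> op_norm N A"
    by (rule op_norm_ge)
  then show ?thesis by (meson order_trans real_sqrt_ge_zero sum_nonneg zero_le_power2)
qed

lemma abs_inner_mat_vec_le_op_norm:
  assumes "N > 0"
  shows "\<bar>\<Sum>i=1..int N. u i * (\<Sum>j=1..int N. A i j * z j)\<bar>
    \<le> sqrt (\<Sum>i=1..int N. (u i)\<^sup>2) * (op_norm N A * sqrt (\<Sum>j=1..int N. (z j)\<^sup>2))"
proof -
  have "sqrt (\<Sum>i=1..int N. (\<Sum>j=1..int N. A i j * z j)\<^sup>2)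
      \<le> sqrt ((op_norm N A)\<^sup>2 * (\<Sum>j=1..int N. (z j)\<^sup>2))"
    by (rule real_sqrt_le_mono[OF op_norm_sum_squares_le])
  also have "\<dots> = op_norm N A * sqrt (\<Sum>j=1..int N. (z j)\<^sup>2)"
    using op_norm_nonneg[OF assms] by (simp add: real_sqrt_mult)
  finally have "sqrt (\<Sum>i=1..int N. (\<Sum>j=1..int N. A i j * z j)\<^sup>2)
      \<le> op_norm N A * sqrt (\<Sum>j=1..int N. (z j)\<^sup>2)" .
  then show ?thesis
    using abs_sum_mult_le_sqrt[of u "\<lambda>i. \<Sum>j=1..int N. A i j * z j" "{1..int N}"]
    by (meson mult_left_mono order_trans real_sqrt_ge_zero sum_nonneg zero_le_power2)
qed

lemma inner_mat_vec_split:
  fixes e u v x :: "'i \<Rightarrow> real" and A :: "'i \<Rightarrow> 'i \<Rightarrow> real"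
  shows "(\<Sum>i\<in>I. e i * (\<Sum>j\<in>I. A i j * x j))
    = (\<Sum>i\<in>I. \<Sum>j\<in>I. u i * A i j * v j) + (\<Sum>i\<in>I. (e i - u i) * (\<Sum>j\<in>I. A i j * x j))
      + (\<Sum>i\<in>I. u i * (\<Sum>j\<in>I. A i j * (x j - v j)))"
proof -
  have "(\<Sum>j\<in>I. u i * A i j * v j) + u i * (\<Sum>j\<in>I. A i j * (x j - v j)) = u i * (\<Sum>j\<in>I. A i j * x j)"
    for i by (simp add: right_diff_distrib sum_subtractf sum_distrib_left mult.assoc)
  then have "(\<Sum>i\<in>I. \<Sum>j\<in>I. u i * A i j * v j) + (\<Sum>i\<in>I. u i * (\<Sum>j\<in>I. A i j * (x j - v j)))
      = (\<Sum>i\<in>I. u i * (\<Sum>j\<in>I. A i j * x j))"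
    by (simp add: sum.distrib[symmetric])
  moreover have "(\<Sum>i\<in>I. (e i - u i) * (\<Sum>j\<in>I. A i j * x j)) + (\<Sum>i\<in>I. u i * (\<Sum>j\<in>I. A i j * x j))
      = (\<Sum>i\<in>I. e i * (\<Sum>j\<in>I. A i j * x j))"
    by (simp add: sum.distrib[symmetric] algebra_simps)
  ultimately show ?thesis by linarith
qed

text \<open>The usual net argument: with \<open>u\<close> close to \<open>A x / \<parallel>A x\<parallel>\<close> and \<open>v\<close> close to \<open>x\<close>,
  \<open>\<parallel>A x\<parallel> = \<langle>u, A v\<rangle> + \<langle>A x / \<parallel>A x\<parallel> - u, A x\<rangle> + \<langle>u, A (x - v)\<rangle>\<close>.\<close>
lemma mat_vec_norm_le_of_net:
  fixes A :: "int \<Rightarrow> int \<Rightarrow> real" and V :: "(int \<Rightarrow> real) set" and N :: nat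
  defines "I \<equiv> {1..int N}"
  assumes "N > 0"
    and near: "\<And>x. (\<Sum>j\<in>I. (x j)\<^sup>2) = 1 \<Longrightarrow> \<exists>v\<in>V. (\<Sum>j\<in>I. (x j - v j)\<^sup>2) \<le> 1/16"
    and small: "\<And>v. v \<in> V \<Longrightarrow> (\<Sum>j\<in>I. (v j)\<^sup>2) \<le> 9/4"
    and bilinear: "\<And>u v. u \<in> V \<Longrightarrow> v \<in> V \<Longrightarrow> \<bar>\<Sum>i\<in>I. \<Sum>j\<in>I. u i * A i j * v j\<bar> \<le> \<tau>"
    and unit: "(\<Sum>j\<in>I. (x j)\<^sup>2) = 1"
  shows "sqrt (\<Sum>i\<in>I. (\<Sum>j\<in>I. A i j * x j)\<^sup>2) \<le> 4 * \<tau> / 3 + op_norm N A / 2"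
proof -
  define y where "y = (\<lambda>i. \<Sum>j\<in>I. A i j * x j)"
  define \<nu> where "\<nu> = sqrt (\<Sum>i\<in>I. (y i)\<^sup>2)"
  obtain v where "v \<in> V" and v_near: "(\<Sum>j\<in>I. (x j - v j)\<^sup>2) \<le> 1/16"
    using near[OF unit] by blast
  have "0 \<le> \<tau>" using bilinear[OF \<open>v \<in> V\<close> \<open>v \<in> V\<close>] by linarith
  have "0 \<le> op_norm N A" using \<open>N > 0\<close> by (rule op_norm_nonneg)
  show ?thesis
  proof (cases "\<nu> = 0")
    case True
    then show ?thesis using \<open>0 \<le> \<tau>\<close> \<open>0 \<le> op_norm N A\<close> by (simp add: \<nu>_def y_def)
  next
    case False
    have "\<nu> > 0" using False unfolding \<nu>_def by (simp add: sum_nonneg order_le_neq_trans)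
    have \<nu>2: "\<nu>\<^sup>2 = (\<Sum>i\<in>I. (y i)\<^sup>2)" unfolding \<nu>_def by (simp add: sum_nonneg)
    define y_unit where "y_unit = (\<lambda>i. y i / \<nu>)"
    have "(\<Sum>i\<in>I. (y_unit i)\<^sup>2) = 1"
      using \<open>\<nu> > 0\<close> by (simp add: y_unit_def power_divide sum_divide_distrib[symmetric] \<nu>2[symmetric])
    then obtain u where "u \<in> V" and u_near: "(\<Sum>i\<in>I. (y_unit i - u i)\<^sup>2) \<le> 1/16"
      using near by blast
    define w where "w = (\<lambda>i. \<Sum>j\<in>I. A i j * (x j - v j))"
    have "\<nu> = (\<Sum>i\<in>I. y_unit i * y i)"
      using \<open>\<nu> > 0\<close>
      by (simp add: y_unit_def sum_divide_distrib[symmetric] power2_eq_square[symmetric] \<nu>2[symmetric])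
        (simp add: power2_eq_square)
    also have "\<dots> = (\<Sum>i\<in>I. \<Sum>j\<in>I. u i * A i j * v j) + (\<Sum>i\<in>I. (y_unit i - u i) * y i)
        + (\<Sum>i\<in>I. u i * w i)"
      unfolding y_def w_def by (rule inner_mat_vec_split)
    also have "\<dots> \<le> \<tau> + \<nu> / 4 + 3 * op_norm N A / 8"
    proof (intro add_mono)
      show "(\<Sum>i\<in>I. \<Sum>j\<in>I. u i * A i j * v j) \<le> \<tau>"
        using bilinear[OF \<open>u \<in> V\<close> \<open>v \<in> V\<close>] by linarith
      have "(\<Sum>i\<in>I. (y_unit i - u i) * y i) \<le> sqrt (\<Sum>i\<in>I. (y_unit i - u i)\<^sup>2) * \<nu>"
        unfolding \<nu>_def y_def by (rule abs_le_D1[OF abs_sum_mult_le_sqrt])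
      also have "\<dots> \<le> 1/4 * \<nu>"
        using u_near \<open>\<nu> > 0\<close> by (intro mult_right_mono real_le_lsqrt) (auto simp: power_divide)
      finally show "(\<Sum>i\<in>I. (y_unit i - u i) * y i) \<le> \<nu> / 4" by simp
      have "(\<Sum>i\<in>I. u i * w i) \<le> sqrt (\<Sum>i\<in>I. (u i)\<^sup>2) * (op_norm N A * sqrt (\<Sum>j\<in>I. (x j - v j)\<^sup>2))"
        unfolding w_def I_def by (rule abs_le_D1[OF abs_inner_mat_vec_le_op_norm[OF \<open>N > 0\<close>]])
      also have "\<dots> \<le> 3/2 * (op_norm N A * (1/4))"
      proof (intro mult_mono mult_left_mono)
        show "sqrt (\<Sum>i\<in>I. (u i)\<^sup>2) \<le> 3/2"
          using small[OF \<open>u \<in> V\<close>] by (intro real_le_lsqrt) (auto simp: power_divide)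
        show "sqrt (\<Sum>j\<in>I. (x j - v j)\<^sup>2) \<le> 1/4"
          using v_near by (intro real_le_lsqrt) (auto simp: power_divide)
      qed (use \<open>0 \<le> op_norm N A\<close> in \<open>auto intro!: mult_nonneg_nonneg sum_nonneg\<close>)
      finally show "(\<Sum>i\<in>I. u i * w i) \<le> 3 * op_norm N A / 8" by simp
    qed
    finally show ?thesis unfolding \<nu>_def y_def by linarith
  qed
qed

lemma op_norm_le_of_net:
  fixes A :: "int \<Rightarrow> int \<Rightarrow> real" and V :: "(int \<Rightarrow> real) set" and N :: nat
  defines "I \<equiv> {1..int N}"
  assumes "N > 0"
    and "\<And>x. (\<Sum>j\<in>I. (x j)\<^sup>2) = 1 \<Longrightarrow> \<exists>v\<in>V. (\<Sum>j\<in>I. (x j - v j)\<^sup>2) \<le> 1/16"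
    and "\<And>v. v \<in> V \<Longrightarrow> (\<Sum>j\<in>I. (v j)\<^sup>2) \<le> 9/4"
    and "\<And>u v. u \<in> V \<Longrightarrow> v \<in> V \<Longrightarrow> \<bar>\<Sum>i\<in>I. \<Sum>j\<in>I. u i * A i j * v j\<bar> \<le> \<tau>"
  shows "op_norm N A \<le> 8 * \<tau> / 3"
proof -
  have "op_norm N A \<le> 4 * \<tau> / 3 + op_norm N A / 2"
    using \<open>N > 0\<close>
  proof (rule op_norm_le)
    show "sqrt (\<Sum>i=1..int N. (\<Sum>j=1..int N. A i j * x j)\<^sup>2) \<le> 4 * \<tau> / 3 + op_norm N A / 2"
      if "(\<Sum>j=1..int N. (x j)\<^sup>2) = 1" for x
      by (rule mat_vec_norm_le_of_net[OF \<open>N > 0\<close> assms(3-5)[unfolded I_def] that])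
  qed
  then show ?thesis by linarith
qed

lemma sum_half_pow_abs_eq: "(\<Sum>z\<in>{- int n..int n}. (1/2::real) ^ nat \<bar>z\<bar>) = 3 - 2 * (1/2) ^ n"
proof (induction n)
  case 0
  then show ?case by simp
next
  case (Suc n)
  have "{- int (Suc n)..int (Suc n)} = insert (int n + 1) (insert (- (int n + 1)) {- int n..int n})"
    by auto
  then have "(\<Sum>z\<in>{- int (Suc n)..int (Suc n)}. (1/2::real) ^ nat \<bar>z\<bar>)
      = (1/2) ^ Suc n + (1/2) ^ Suc n + (\<Sum>z\<in>{- int n..int n}. (1/2::real) ^ nat \<bar>z\<bar>)"
    by (simp add: nat_add_distrib)
  then show ?case using Suc by simp
qed

lemma sum_half_pow_abs_le: "(\<Sum>z\<in>{-L..L}. (1/2::real) ^ nat \<bar>z\<bar>) \<le> 3"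
proof (cases "L < 0")
  case False
  then obtain n where "L = int n" by (metis nonneg_int_cases not_less)
  then show ?thesis using sum_half_pow_abs_eq[of n] by simp
qed simp

text \<open>Scaled by \<open>1 / (2 \<surd>N)\<close> (see \<open>net_vector\<close>), these integer points form a
  \<open>1/4\<close>-net of the unit sphere of \<open>R^N\<close> inside the ball of radius \<open>3/2\<close>. The box
  constraint is implied by the quadratic one and only makes finiteness evident.\<close>
definition int_net :: "nat \<Rightarrow> (int \<Rightarrow> int) set" where
  "int_net N = {k \<in> PiE {1..int N} (\<lambda>_. {-3 * int N..3 * int N}).
     (\<Sum>j=1..int N. (real_of_int (k j))\<^sup>2) \<le> 9 * real N}"

definition net_vector :: "nat \<Rightarrow> (int \<Rightarrow> int) \<Rightarrow> int \<Rightarrow> real" where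
  "net_vector N k j = real_of_int (k j) / (2 * sqrt (real N))"

lemma finite_int_net: "finite (int_net N)"
proof -
  have "finite (PiE {1..int N} (\<lambda>_. {-3 * int N..3 * int N}))" by (intro finite_PiE) auto
  then show ?thesis unfolding int_net_def by (rule finite_subset[rotated]) auto
qed

text \<open>By Cauchy-Schwarz each \<open>k\<close> in the net has \<open>\<Sum>j. \<bar>k j\<bar> \<le> 3N\<close>, so its weight
  \<open>2^(- \<Sum>j. \<bar>k j\<bar>)\<close> is at least \<open>8^(-N)\<close>, while the total weight of the box is at
  most \<open>3^N\<close>.\<close>
lemma card_int_net_le: "real (card (int_net N)) \<le> 24 ^ N"
proof -
  define I where "I = {1..int N}"
  define box where "box = PiE I (\<lambda>_. {-3 * int N..3 * int N})"
  define weight where "weight = (\<lambda>k::int \<Rightarrow> int. \<Prod>j\<in>I. (1/2::real) ^ nat \<bar>k j\<bar>)"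
  have weight_ge: "1 \<le> 8 ^ N * weight k" if "k \<in> int_net N" for k
  proof -
    have "(\<Sum>j\<in>I. \<bar>real_of_int (k j)\<bar> * 1) \<le> sqrt (\<Sum>j\<in>I. \<bar>real_of_int (k j)\<bar>\<^sup>2) * sqrt (\<Sum>j\<in>I. 1\<^sup>2)"
      by (rule abs_le_D1[OF abs_sum_mult_le_sqrt])
    also have "\<dots> \<le> sqrt (9 * real N) * sqrt (\<Sum>j\<in>I. 1\<^sup>2)"
      using that by (intro mult_right_mono real_sqrt_le_mono) (auto simp: int_net_def I_def)
    also have "\<dots> = 3 * real N" by (simp add: real_sqrt_mult I_def)
    finally have "real (\<Sum>j\<in>I. nat \<bar>k j\<bar>) \<le> real (3 * N)" by (simp add: of_nat_sum)
    then have "(\<Sum>j\<in>I. nat \<bar>k j\<bar>) \<le> 3 * N" by (simp only: of_nat_le_iff)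
    then have "(1/2::real) ^ (3 * N) \<le> (1/2) ^ (\<Sum>j\<in>I. nat \<bar>k j\<bar>)"
      by (rule power_decreasing) auto
    also have "\<dots> = weight k" unfolding weight_def by (simp add: power_sum)
    finally have "8 ^ N * (1/2::real) ^ (3 * N) \<le> 8 ^ N * weight k" by simp
    then show ?thesis by (simp add: power_mult power_one_over)
  qed
  have weight_nonneg: "0 \<le> weight k" for k
    unfolding weight_def by (intro prod_nonneg) auto
  have "real (card (int_net N)) = (\<Sum>k\<in>int_net N. 1)" by simp
  also have "\<dots> \<le> (\<Sum>k\<in>int_net N. 8 ^ N * weight k)"
    using weight_ge by (intro sum_mono) auto
  also have "\<dots> \<le> (\<Sum>k\<in>box. 8 ^ N * weight k)"
    using weight_nonneg by (intro sum_mono2) (auto simp: box_def I_def int_net_def intro: finite_PiE)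
  also have "\<dots> = 8 ^ N * (\<Prod>j\<in>I. \<Sum>z\<in>{-3 * int N..3 * int N}. (1/2::real) ^ nat \<bar>z\<bar>)"
    unfolding box_def weight_def sum_distrib_left[symmetric]
    using prod_sum_PiE[of I "\<lambda>_. {-3 * int N..3 * int N}" "\<lambda>_ z. (1/2::real) ^ nat \<bar>z\<bar>"]
    by (simp add: I_def)
  also have "\<dots> \<le> 8 ^ N * (\<Prod>j\<in>I. 3)"
    using sum_half_pow_abs_le by (intro mult_left_mono prod_mono) (auto intro: sum_nonneg)
  also have "\<dots> = 24 ^ N"
    by (simp add: I_def power_mult_distrib[symmetric])
  finally show ?thesis .
qed

lemma net_vector_sum_squares_le:
  assumes "N > 0" and "k \<in> int_net N"
  shows "(\<Sum>j=1..int N. (net_vector N k j)\<^sup>2) \<le> 9/4"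
proof -
  have "(\<Sum>j=1..int N. (net_vector N k j)\<^sup>2) = (\<Sum>j=1..int N. (real_of_int (k j))\<^sup>2) / (4 * real N)"
    by (simp add: net_vector_def power_divide power_mult_distrib sum_divide_distrib)
  also have "\<dots> \<le> 9 * real N / (4 * real N)"
    using assms by (intro divide_right_mono) (auto simp: int_net_def)
  finally show ?thesis using assms(1) by simp
qed

lemma round_scaled_square_le:
  assumes "m > 0"
  shows "(real_of_int (round (y * m)))\<^sup>2 \<le> 2 * m\<^sup>2 * y\<^sup>2 + 1/2"
proof -
  have "\<bar>real_of_int (round (y * m))\<bar> \<le> \<bar>y\<bar> * m + 1/2"
    using of_int_round_abs_le[of "y * m"] abs_triangle_ineq2[of "real_of_int (round (y * m))" "y * m"] assms
    by (simp add: abs_mult abs_minus_commute)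
  then have "(real_of_int (round (y * m)))\<^sup>2 \<le> (\<bar>y\<bar> * m + 1/2)\<^sup>2"
    by (metis abs_ge_zero power2_abs power_mono)
  also have "\<dots> \<le> 2 * m\<^sup>2 * y\<^sup>2 + 1/2"
    using sum_squares_bound[of "\<bar>y\<bar> * m" "1/2"] by (simp add: power2_eq_square algebra_simps)
  finally show ?thesis .
qed

lemma mem_int_net_of_sum_squares_le:
  assumes "N > 0" and "k \<in> extensional {1..int N}"
    and sum_le: "(\<Sum>j=1..int N. (real_of_int (k j))\<^sup>2) \<le> 9 * real N"
  shows "k \<in> int_net N"
proof -
  have "k j \<in> {-3 * int N..3 * int N}" if "j \<in> {1..int N}" for j
  proof -
    have "(real_of_int (k j))\<^sup>2 \<le> (\<Sum>j=1..int N. (real_of_int (k j))\<^sup>2)"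
      using that by (intro member_le_sum) auto
    also have "\<dots> \<le> 9 * real N * 1"
      using sum_le by simp
    also have "\<dots> \<le> 9 * real N * real N"
      using assms(1) by (intro mult_left_mono) auto
    also have "\<dots> = (3 * real N)\<^sup>2"
      by (simp add: power2_eq_square)
    finally have "\<bar>real_of_int (k j)\<bar> \<le> \<bar>3 * real N\<bar>"
      by (simp only: abs_le_square_iff)
    then have "\<bar>k j\<bar> \<le> 3 * int N" by linarith
    then show ?thesis by auto
  qed
  then show ?thesis
    using assms(2) sum_le unfolding int_net_def by (auto simp: PiE_iff)
qed

lemma int_net_approx:
  assumes "N > 0" and unit: "(\<Sum>j=1..int N. (x j)\<^sup>2) = 1"
  shows "\<exists>k\<in>int_net N. (\<Sum>j=1..int N. (x j - net_vector N k j)\<^sup>2) \<le> 1/16"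
proof -
  define I where "I = {1..int N}"
  define m where "m = 2 * sqrt (real N)"
  define k where "k = restrict (\<lambda>j. round (x j * m)) I"
  have "m > 0" and m2: "m\<^sup>2 = 4 * real N"
    using assms(1) by (simp_all add: m_def power_mult_distrib)
  have "(\<Sum>j\<in>I. (real_of_int (k j))\<^sup>2) \<le> (\<Sum>j\<in>I. 2 * m\<^sup>2 * (x j)\<^sup>2 + 1/2)"
    using round_scaled_square_le[OF \<open>m > 0\<close>] by (intro sum_mono) (simp add: k_def)
  also have "\<dots> = 8 * real N + real N / 2"
    using unit by (simp add: sum.distrib sum_distrib_left[symmetric] m2 I_def)
  finally have "k \<in> int_net N"
    using assms(1) by (intro mem_int_net_of_sum_squares_le) (auto simp: k_def I_def)
  have "(\<Sum>j\<in>I. (x j - net_vector N k j)\<^sup>2) \<le> (\<Sum>j\<in>I. (1/2)\<^sup>2 / m\<^sup>2)"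
  proof (intro sum_mono)
    fix j assume "j \<in> I"
    have "x j - net_vector N k j = (x j * m - real_of_int (k j)) / m"
      using \<open>m > 0\<close> by (simp add: net_vector_def m_def field_simps)
    then have "(x j - net_vector N k j)\<^sup>2 = \<bar>x j * m - real_of_int (k j)\<bar>\<^sup>2 / m\<^sup>2"
      by (simp add: power_divide)
    also have "\<dots> \<le> (1/2)\<^sup>2 / m\<^sup>2"
      using \<open>j \<in> I\<close> of_int_round_abs_le[of "x j * m"]
      by (intro divide_right_mono power_mono) (auto simp: k_def abs_minus_commute)
    finally show "(x j - net_vector N k j)\<^sup>2 \<le> (1/2)\<^sup>2 / m\<^sup>2" .
  qed
  also have "\<dots> = 1/16"
    using assms(1) \<open>m > 0\<close> by (simp add: m2 I_def power_divide)
  finally show ?thesis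
    using \<open>k \<in> int_net N\<close> unfolding I_def by blast
qed

lemma op_norm_le_of_int_net:
  assumes "N > 0"
    and "\<And>k l. k \<in> int_net N \<Longrightarrow> l \<in> int_net N \<Longrightarrow>
      \<bar>\<Sum>i=1..int N. \<Sum>j=1..int N. net_vector N k i * A i j * net_vector N l j\<bar> \<le> \<tau>"
  shows "op_norm N A \<le> 8 * \<tau> / 3"
  using assms(1)
proof (rule op_norm_le_of_net[where V = "net_vector N ` int_net N"])
  show "\<exists>v\<in>net_vector N ` int_net N. (\<Sum>j=1..int N. (x j - v j)\<^sup>2) \<le> 1/16"
    if "(\<Sum>j=1..int N. (x j)\<^sup>2) = 1" for x
    using int_net_approx[OF assms(1) that] by blast
qed (use assms net_vector_sum_squares_le in auto)

lemma bilinear_symmetrized_eq: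
  fixes u v :: "'i \<Rightarrow> real" and X :: "'i \<times> 'i \<Rightarrow> real"
  shows "(\<Sum>i\<in>I. \<Sum>j\<in>I. u i * (X (i, j) + X (j, i)) * v j)
    = (\<Sum>p\<in>I \<times> I. (case p of (i, j) \<Rightarrow> u i * v j + u j * v i) * X p)"
proof -
  have "(\<Sum>i\<in>I. \<Sum>j\<in>I. u i * (X (i, j) + X (j, i)) * v j)
      = (\<Sum>i\<in>I. \<Sum>j\<in>I. u i * v j * X (i, j)) + (\<Sum>i\<in>I. \<Sum>j\<in>I. u i * v j * X (j, i))"
    by (simp add: sum.distrib[symmetric] algebra_simps)
  also have "(\<Sum>i\<in>I. \<Sum>j\<in>I. u i * v j * X (j, i)) = (\<Sum>i\<in>I. \<Sum>j\<in>I. u j * v i * X (i, j))"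
    by (rule sum.swap)
  also have "(\<Sum>i\<in>I. \<Sum>j\<in>I. u i * v j * X (i, j)) + (\<Sum>i\<in>I. \<Sum>j\<in>I. u j * v i * X (i, j))
      = (\<Sum>i\<in>I. \<Sum>j\<in>I. (u i * v j + u j * v i) * X (i, j))"
    by (simp add: sum.distrib[symmetric] algebra_simps)
  also have "\<dots> = (\<Sum>p\<in>I \<times> I. (case p of (i, j) \<Rightarrow> u i * v j + u j * v i) * X p)"
    unfolding sum.cartesian_product by (intro sum.cong) auto
  finally show ?thesis .
qed

lemma sum_squares_symmetrized_le:
  fixes u v :: "'i \<Rightarrow> real"
  shows "(\<Sum>p\<in>I \<times> I. (case p of (i, j) \<Rightarrow> u i * v j + u j * v i)\<^sup>2)
    \<le> 4 * (\<Sum>i\<in>I. (u i)\<^sup>2) * (\<Sum>i\<in>I. (v i)\<^sup>2)"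
proof -
  have "(\<Sum>p\<in>I \<times> I. (case p of (i, j) \<Rightarrow> u i * v j + u j * v i)\<^sup>2)
      = (\<Sum>i\<in>I. \<Sum>j\<in>I. (u i * v j + u j * v i)\<^sup>2)"
    unfolding sum.cartesian_product by (intro sum.cong) auto
  also have "\<dots> \<le> (\<Sum>i\<in>I. \<Sum>j\<in>I. 2 * ((u i)\<^sup>2 * (v j)\<^sup>2) + 2 * ((u j)\<^sup>2 * (v i)\<^sup>2))"
  proof (intro sum_mono)
    fix i j
    have "0 \<le> (u i * v j - u j * v i)\<^sup>2" by simp
    then show "(u i * v j + u j * v i)\<^sup>2 \<le> 2 * ((u i)\<^sup>2 * (v j)\<^sup>2) + 2 * ((u j)\<^sup>2 * (v i)\<^sup>2)"
      by (simp add: power2_eq_square algebra_simps)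
  qed
  also have "\<dots> = 2 * (\<Sum>i\<in>I. \<Sum>j\<in>I. (u i)\<^sup>2 * (v j)\<^sup>2) + 2 * (\<Sum>i\<in>I. \<Sum>j\<in>I. (u j)\<^sup>2 * (v i)\<^sup>2)"
    by (simp add: sum.distrib sum_distrib_left)
  also have "(\<Sum>i\<in>I. \<Sum>j\<in>I. (u j)\<^sup>2 * (v i)\<^sup>2) = (\<Sum>i\<in>I. \<Sum>j\<in>I. (u i)\<^sup>2 * (v j)\<^sup>2)"
    by (rule sum.swap)
  also have "(\<Sum>i\<in>I. \<Sum>j\<in>I. (u i)\<^sup>2 * (v j)\<^sup>2) = (\<Sum>i\<in>I. (u i)\<^sup>2) * (\<Sum>i\<in>I. (v i)\<^sup>2)"
    by (simp add: sum_product)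
  finally show ?thesis by simp
qed

context stationary_gaussian_field
begin

lemma net_bilinear_tail_le:
  assumes "N > 0" and "k \<in> int_net N" and "l \<in> int_net N" and "\<tau> > 0"
  shows "prob {\<omega> \<in> space M. \<tau> < \<bar>\<Sum>i=1..int N. \<Sum>j=1..int N.
      net_vector N k i * ((Z (i, j) \<omega> - \<theta>) + (Z (j, i) \<omega> - \<theta>)) * net_vector N l j\<bar>}
    \<le> (81 / 4 * real N * infsum (\<lambda>s. \<bar>R s\<bar>) UNIV / \<tau>\<^sup>2) ^ N"
proof -
  define I where "I = {1..int N}"
  define c where "c = (\<lambda>p. case p of (i, j) \<Rightarrow>
    net_vector N k i * net_vector N l j + net_vector N k j * net_vector N l i)"
  define S where "S = infsum (\<lambda>s. \<bar>R s\<bar>) UNIV"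
  have "0 \<le> S" unfolding S_def by (rule infsum_nonneg) auto
  have "(\<Sum>p\<in>I \<times> I. (c p)\<^sup>2) \<le> 4 * (9/4) * (9/4)"
  proof -
    have "(\<Sum>p\<in>I \<times> I. (c p)\<^sup>2) \<le> 4 * (\<Sum>i\<in>I. (net_vector N k i)\<^sup>2) * (\<Sum>i\<in>I. (net_vector N l i)\<^sup>2)"
      unfolding c_def by (rule sum_squares_symmetrized_le)
    also have "\<dots> \<le> 4 * (9/4) * (9/4)"
      using net_vector_sum_squares_le[OF assms(1)] assms(2,3)
      by (intro mult_mono) (auto simp: I_def intro: sum_nonneg)
    finally show ?thesis .
  qed
  have "prob {\<omega> \<in> space M. \<tau> < \<bar>\<Sum>i\<in>I. \<Sum>j\<in>I.
      net_vector N k i * ((Z (i, j) \<omega> - \<theta>) + (Z (j, i) \<omega> - \<theta>)) * net_vector N l j\<bar>}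
    = prob {\<omega> \<in> space M. \<tau> < \<bar>\<Sum>p\<in>I \<times> I. c p * (Z p \<omega> - \<theta>)\<bar>}"
  proof -
    have "(\<Sum>i\<in>I. \<Sum>j\<in>I. net_vector N k i * ((Z (i, j) \<omega> - \<theta>) + (Z (j, i) \<omega> - \<theta>)) * net_vector N l j)
        = (\<Sum>p\<in>I \<times> I. c p * (Z p \<omega> - \<theta>))" for \<omega>
      unfolding c_def by (rule bilinear_symmetrized_eq[where X = "\<lambda>p. Z p \<omega> - \<theta>"])
    then show ?thesis by simp
  qed
  also have "\<dots> \<le> (real N * (S * (\<Sum>p\<in>I \<times> I. (c p)\<^sup>2))) ^ N / \<tau> ^ (2 * N)"
    unfolding S_def using assms(4) by (intro centered_lincomb_tail_le) (auto simp: I_def)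
  also have "\<dots> \<le> (real N * (S * (4 * (9/4) * (9/4)))) ^ N / \<tau> ^ (2 * N)"
    using \<open>(\<Sum>p\<in>I \<times> I. (c p)\<^sup>2) \<le> _\<close> \<open>0 \<le> S\<close>
    by (intro divide_right_mono power_mono mult_left_mono) (auto intro!: mult_nonneg_nonneg sum_nonneg)
  also have "\<dots> = (real N * (S * (4 * (9/4) * (9/4))) / \<tau>\<^sup>2) ^ N"
    by (simp only: power_mult power_divide)
  also have "real N * (S * (4 * (9/4) * (9/4))) = 81 / 4 * real N * S"
    by simp
  finally show ?thesis unfolding I_def S_def .
qed

text \<open>Union bound over the at most \<open>24^(2N)\<close> pairs of net points at level
  \<open>\<tau> = 3 t \<surd>N / 8\<close>, so that \<open>8 \<tau> / 3 = t \<surd>N\<close>.\<close>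
lemma op_norm_tail_le:
  assumes "N > 0" and "t > 0"
  shows "prob {\<omega> \<in> space M. op_norm N (\<lambda>i j. (Z (i, j) \<omega> - \<theta>) + (Z (j, i) \<omega> - \<theta>)) > t * sqrt (real N)}
    \<le> (82944 * infsum (\<lambda>s. \<bar>R s\<bar>) UNIV / t\<^sup>2) ^ N"
proof -
  define S where "S = infsum (\<lambda>s. \<bar>R s\<bar>) UNIV"
  define \<tau> where "\<tau> = 3 * t * sqrt (real N) / 8"
  define W where "W = (\<lambda>\<omega> i j. (Z (i, j) \<omega> - \<theta>) + (Z (j, i) \<omega> - \<theta>))"
  define event where "event = (\<lambda>(k, l). {\<omega> \<in> space M. \<tau> < \<bar>\<Sum>i=1..int N. \<Sum>j=1..int N.
      net_vector N k i * W \<omega> i j * net_vector N l j\<bar>})"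
  have "\<tau> > 0" "0 \<le> S"
    using assms unfolding \<tau>_def S_def by (auto intro: infsum_nonneg)
  have event_sets: "event kl \<in> sets M" for kl
    unfolding event_def W_def by (cases kl) simp
  have "{\<omega> \<in> space M. op_norm N (W \<omega>) > t * sqrt (real N)} \<subseteq> (\<Union>kl\<in>int_net N \<times> int_net N. event kl)"
  proof safe
    fix \<omega> assume "\<omega> \<in> space M" and large: "t * sqrt (real N) < op_norm N (W \<omega>)"
    show "\<omega> \<in> (\<Union>kl\<in>int_net N \<times> int_net N. event kl)"
    proof (rule ccontr)
      assume "\<omega> \<notin> (\<Union>kl\<in>int_net N \<times> int_net N. event kl)"
      then have "op_norm N (W \<omega>) \<le> 8 * \<tau> / 3"
        using \<open>\<omega> \<in> space M\<close> by (intro op_norm_le_of_int_net[OF assms(1)]) (force simp: event_def)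
      then show False using large by (simp add: \<tau>_def)
    qed
  qed
  then have "prob {\<omega> \<in> space M. op_norm N (W \<omega>) > t * sqrt (real N)}
      \<le> prob (\<Union>kl\<in>int_net N \<times> int_net N. event kl)"
    using event_sets finite_int_net by (intro finite_measure_mono) auto
  also have "\<dots> \<le> (\<Sum>kl\<in>int_net N \<times> int_net N. prob (event kl))"
    using event_sets finite_int_net by (intro finite_measure_subadditive_finite) auto
  also have "\<dots> \<le> (\<Sum>kl\<in>int_net N \<times> int_net N. (81 / 4 * real N * S / \<tau>\<^sup>2) ^ N)"
    using net_bilinear_tail_le[OF assms(1) _ _ \<open>\<tau> > 0\<close>]
    by (intro sum_mono) (auto simp: event_def W_def S_def)
  also have "\<dots> = real (card (int_net N)) * real (card (int_net N)) * (144 * S / t\<^sup>2) ^ N"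
  proof -
    have \<tau>2: "\<tau>\<^sup>2 = 9 * t\<^sup>2 * real N / 64"
      by (simp add: \<tau>_def power_divide power_mult_distrib)
    have "81 / 4 * real N * S / \<tau>\<^sup>2 = 144 * S / t\<^sup>2"
      unfolding \<tau>2 using assms by (simp add: field_simps)
    then show ?thesis by (simp add: card_cartesian_product)
  qed
  also have "\<dots> \<le> 24 ^ N * 24 ^ N * (144 * S / t\<^sup>2) ^ N"
    using card_int_net_le \<open>0 \<le> S\<close> by (intro mult_right_mono mult_mono) auto
  also have "\<dots> = (82944 * S / t\<^sup>2) ^ N"
    by (simp add: power_mult_distrib[symmetric])
  finally show ?thesis unfolding W_def S_def .
qed

end

lemma tendsto_SUP_zero_of_pow_bound:
  fixes P :: "real \<Rightarrow> nat \<Rightarrow> real"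
  assumes "C \<ge> 0" and nonneg: "\<And>t N. 0 \<le> P t N"
    and bound: "\<And>t N. t > 0 \<Longrightarrow> N \<ge> 1 \<Longrightarrow> P t N \<le> (C / t\<^sup>2) ^ N"
  shows "((\<lambda>t. SUP N\<in>{1..}. P t N) \<longlongrightarrow> 0) at_top"
proof -
  have "filterlim (\<lambda>t::real. t\<^sup>2) at_top at_top"
    by (intro filterlim_pow_at_top filterlim_ident) simp
  then have limit: "((\<lambda>t::real. C / t\<^sup>2) \<longlongrightarrow> 0) at_top"
    by (intro tendsto_divide_0[OF tendsto_const] filterlim_at_top_imp_at_infinity)
  have "eventually (\<lambda>t. C / t\<^sup>2 < 1) at_top"
    using order_tendstoD(2)[OF limit] by simp
  then have small: "eventually (\<lambda>t. 0 < t \<and> C / t\<^sup>2 < 1) at_top"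
    using eventually_gt_at_top[of 0] by eventually_elim simp
  have between: "0 \<le> (SUP N\<in>{1..}. P t N) \<and> (SUP N\<in>{1..}. P t N) \<le> C / t\<^sup>2"
    if "0 < t" and "C / t\<^sup>2 < 1" for t
  proof -
    have le: "P t N \<le> C / t\<^sup>2" if "N \<ge> 1" for N
    proof -
      have "P t N \<le> (C / t\<^sup>2) ^ N" using bound \<open>0 < t\<close> that by simp
      also have "\<dots> \<le> (C / t\<^sup>2) ^ 1"
        using \<open>C / t\<^sup>2 < 1\<close> \<open>C \<ge> 0\<close> that by (intro power_decreasing) auto
      finally show ?thesis by simp
    qed
    then have "bdd_above (P t ` {1..})" by (intro bdd_aboveI2[where M = "C / t\<^sup>2"]) auto
    then have "P t 1 \<le> (SUP N\<in>{1..}. P t N)" by (intro cSUP_upper) auto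
    then show ?thesis using nonneg[of t 1] le by (auto intro: cSUP_least)
  qed
  show ?thesis
    by (rule tendsto_sandwich[OF _ _ tendsto_const limit]) (use small between in \<open>auto elim: eventually_mono\<close>)
qed

theorem lemma1:
  fixes M :: "'a measure" and Z :: "int \<times> int \<Rightarrow> 'a \<Rightarrow> real" and \<theta> :: real
    and R :: "int \<times> int \<Rightarrow> real"
  assumes "prob_space M"
    and "\<theta> > 0"
    and "gaussian_process M Z"
    and "stationary_Z2 M Z"
    and "\<And>s. prob_space.expectation M (Z s) = \<theta>"
    and "\<And>s. R s = prob_space.expectation M (\<lambda>\<omega>. (Z (0,0) \<omega> - \<theta>) * (Z s \<omega> - \<theta>))"
    and "(\<lambda>s. \<bar>R s\<bar>) summable_on UNIV"
    and "infsum R UNIV \<noteq> 0"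
  shows "((\<lambda>t. SUP N\<in>{1::nat..}. measure M
            {\<omega> \<in> space M. op_norm N (\<lambda>i j. (Z (i,j) \<omega> - \<theta>) + (Z (j,i) \<omega> - \<theta>)) > t * sqrt (real N)})
          \<longlongrightarrow> 0) at_top"
proof -
  interpret stationary_gaussian_field M Z \<theta> R
    using assms(1,3-7) by (simp add: stationary_gaussian_field_def stationary_gaussian_field_axioms_def)
  have "0 \<le> infsum (\<lambda>s. \<bar>R s\<bar>) UNIV" by (simp add: infsum_nonneg)
  then show ?thesis
    by (intro tendsto_SUP_zero_of_pow_bound[where C = "82944 * infsum (\<lambda>s. \<bar>R s\<bar>) UNIV"]
        op_norm_tail_le) auto
qed

end
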